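(* Consider the algorithm AILFEM described in the context, with arbitrary parameters $0<\theta\le 1$, $C_{\mathrm{mark}}\ge 1$, $\lambda_{\mathrm{lin}},\lambda_{\mathrm{alg}}>0$, $i_{\min}\in\mathbb{N}$, $\delta>0$ and an initial guess $u_0^{0,0}\in\mathcal{X}_0$ with $|||u_0^{0,0}|||\le 2M$. Then, independently of the adaptivity parameters $\theta$, $\lambda_{\mathrm{lin}}$ and $\lambda_{\mathrm{alg}}$, the $i$-loop of the algorithm always terminates, i.e., $\underline{i}[\ell,k]<\infty$ for all $(\ell,k,0)\in\mathcal{Q}$.
   Context: Abstract setting. Let $\mathcal{X}$ be a real Hilbert space with scalar product $\langle\!\langle\cdot,\cdot\rangle\!\rangle$ and norm $|||\cdot|||$, with dual space $\mathcal{X}'$ (norm $\|\cdot\|_{\mathcal{X}'}$, duality bracket $\langle\cdot,\cdot\rangle$). Let $\mathcal{A}:\mathcal{X}\to\mathcal{X}'$ be a nonlinear operator and $F\in\mathcal{X}'$ with $\mathcal{A}0\neq F$. Assume: (SM) there is $\alpha>0$ with $\alpha|||v-w|||^2\le\langle\mathcal{A}v-\mathcal{A}w,v-w\rangle$ for all $v,w\in\mathcal{X}$; (LIP) for every $\vartheta>0$ there is $L[\vartheta]>0$ with $\langle\mathcal{A}v-\mathcal{A}w,\varphi\rangle\le L[\vartheta]\,|||v-w|||\,|||\varphi|||$ for all $v,w,\varphi\in\mathcal{X}$ with $\max\{|||v|||,|||v-w|||\}\le\vartheta$; (POT) there is a Gâteaux differentiable $\mathcal{P}:\mathcal{X}\to\mathbb{R}$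 with $\langle\mathcal{A}w,v\rangle=\lim_{t\to0}(\mathcal{P}(w+tv)-\mathcal{P}(w))/t$ for all $v,w$. The energy is $\mathcal{E}(v):=\mathcal{P}(v)-F(v)$. For every closed subspace $\mathcal{Y}\subseteq\mathcal{X}$ there is a unique $u^\star_{\mathcal{Y}}\in\mathcal{Y}$ with $\langle\mathcal{A}u^\star_{\mathcal{Y}},v\rangle=F(v)$ for all $v\in\mathcal{Y}$; $u^\star:=u^\star_{\mathcal{X}}$. Put $M:=\|F-\mathcal{A}0\|_{\mathcal{X}'}/\alpha$. Meshes. $\mathcal{T}_0$ is an initial conforming simplicial triangulation; $\mathtt{refine}(\mathcal{T}_H,\mathcal{M}_H)$ is the coarsest newest-vertex-bisection (NVB) refinement of $\mathcal{T}_H$ in which all elements of $\mathcal{M}_H\subseteq\mathcal{T}_H$ are refined; $\mathbb{T}(\mathcal{T}_H)$ is the set of meshes obtained from $\mathcal{T}_H$ by finitely many NVB steps, $\mathbb{T}:=\mathbb{T}(\mathcal{T}_0)$. Each $\mathcal{T}_H\in\mathbb{T}$ is associated with a finite-dimensional subspace $\mathcal{X}_H\subset\mathcal{X}$, nested: $\mathcal{X}_H\subseteq\mathcal{X}_h$ if $\mathcal{T}_h\in\mathbb{T}(\mathcal{T}_H)$. Write $u_H^\star:=u^\star_{\mathcal{X}_H}$. Zarantonello map: for $\delta>0$, $w_H\in\mathcal{X}_H$, $\Phi_H(\delta;w_H)\in\mathcal{X}_H$ is the unique solution of $\langle\!\langle\Phi_H(\delta;w_H),v_H\rangle\!\rangle=\langle\!\langle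 w_H,v_H\rangle\!\rangle+\delta[F(v_H)-\langle\mathcal{A}w_H,v_H\rangle]$ for all $v_H\in\mathcal{X}_H$. Algebraic solver: there is $0<q_{\mathrm{alg}}<1$ and for each $\mathcal{T}_H$ a map $\Psi_H:\mathcal{X}'\times\mathcal{X}_H\to\mathcal{X}_H$ such that for every $\varphi\in\mathcal{X}'$, with $w_H^\star\in\mathcal{X}_H$ solving $\langle\!\langle w_H^\star,v_H\rangle\!\rangle=\varphi(v_H)$ for all $v_H\in\mathcal{X}_H$, one has $|||w_H^\star-\Psi_H(\varphi;w_H)|||\le q_{\mathrm{alg}}|||w_H^\star-w_H|||$ for all $w_H\in\mathcal{X}_H$. One writes $\Psi_H(w_H^\star;\cdot)$ for $\Psi_H(\varphi;\cdot)$. Estimator: for $\mathcal{T}_H\in\mathbb{T}$, $T\in\mathcal{T}_H$, $v_H\in\mathcal{X}_H$ a number $\eta_H(T,v_H)\ge0$ is given; $\eta_H(\mathcal{U},v_H):=(\sum_{T\in\mathcal{U}}\eta_H(T,v_H)^2)^{1/2}$ for $\mathcal{U}\subseteq\mathcal{T}_H$ and $\eta_H(v_H):=\eta_H(\mathcal{T}_H,v_H)$. Index $\ell$ refers to $\mathcal{T}_\ell$, $\mathcal{X}_\ell$, $\Phi_\ell$, $\Psi_\ell$, $\eta_\ell$, $u_\ell^\star$. Algorithm AILFEM. Input: $\mathcal{T}_0$, $0<\theta\le1$, $C_{\mathrm{mark}}\ge1$, $\lambda_{\mathrm{lin}},\lambda_{\mathrm{alg}}>0$, $i_{\min}\in\mathbb{N}$,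 $\delta>0$, $u_0^{0,0}\in\mathcal{X}_0$ with $|||u_0^{0,0}|||\le2M$; set $u_0^{0,\star}:=u_0^{0,\underline{i}}:=u_0^{0,0}$. For $\ell=0,1,2,\dots$: (I) For $k=1,2,\dots$: set $u_\ell^{k,0}:=u_\ell^{k-1,\underline{i}}$ and $u_\ell^{k,\star}:=\Phi_\ell(\delta;u_\ell^{k-1,\underline{i}})$ (not computed). For $i=1,2,\dots$: compute $u_\ell^{k,i}:=\Psi_\ell(u_\ell^{k,\star};u_\ell^{k,i-1})$ and $\eta_\ell(u_\ell^{k,i})$; terminate the $i$-loop with $\underline{i}[\ell,k]:=i$ if $|||u_\ell^{k,i-1}-u_\ell^{k,i}|||\le\lambda_{\mathrm{alg}}[\lambda_{\mathrm{lin}}\eta_\ell(u_\ell^{k,i})+|||u_\ell^{k,i}-u_\ell^{k,0}|||]$ and $i_{\min}\le i$. Write $u_\ell^{k,\underline{i}}:=u_\ell^{k,\underline{i}[\ell,k]}$. Terminate the $k$-loop with $\underline{k}[\ell]:=k$ if $\mathcal{E}(u_\ell^{k,0})-\mathcal{E}(u_\ell^{k,\underline{i}})\le\lambda_{\mathrm{lin}}^2\eta_\ell(u_\ell^{k,\underline{i}})^2$ and $|||u_\ell^{k,\underline{i}}|||\le2M$. (II) Choose $\mathcal{M}_\ell\subseteq\mathcal{T}_\ell$ with $\theta\,\eta_\ell(u_\ell^{\underline{k},\underline{i}})^2\le\eta_\ell(\mathcal{M}_\ell,u_\ell^{\underline{k},\underline{i}})^2$ and $\#\mathcal{M}_\ell\le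 C_{\mathrm{mark}}\min\{\#\mathcal{U}:\mathcal{U}\subseteq\mathcal{T}_\ell,\ \theta\eta_\ell(u_\ell^{\underline{k},\underline{i}})^2\le\eta_\ell(\mathcal{U},u_\ell^{\underline{k},\underline{i}})^2\}$. (III) $\mathcal{T}_{\ell+1}:=\mathtt{refine}(\mathcal{T}_\ell,\mathcal{M}_\ell)$ and $u_{\ell+1}^{0,0}:=u_{\ell+1}^{0,\underline{i}}:=u_{\ell+1}^{0,\star}:=u_\ell^{\underline{k},\underline{i}}$. Index set: $\mathcal{Q}:=\{(\ell,k,i)\in\mathbb{N}_0^3: u_\ell^{k,i}\text{ is used in the algorithm}\}$, and $\underline{i}[\ell,k]:=\sup\{i\in\mathbb{N}:(\ell,k,i)\in\mathcal{Q}\}\in\mathbb{N}\cup\{\infty\}$. *)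

theory Defs
  imports "HOL-Analysis.Analysis"
begin

text \<open>Type 'a: the Hilbert space X (norm and inner product of real_inner).
  A w v stands for the duality pairing of A w with v; F v for F(v); P is the potential.
  Type 'm: meshes; type 'e: elements; elems H is the set of elements of mesh H;
  refine H M is the refinement of H by the marked set M.
  Psi H phi w is the algebraic solver step Psi_H(phi; w).
  eta H T v is the local error indicator eta_H(T, v).\<close>

locale ailfem_alg =
  fixes A :: "'a::{real_inner,complete_space} \<Rightarrow> 'a \<Rightarrow> real"
    and F :: "'a \<Rightarrow> real"
    and P :: "'a \<Rightarrow> real"
    and alpha :: real
    and delta :: real
    and Psi :: "'m \<Rightarrow> ('a \<Rightarrow> real) \<Rightarrow> 'a \<Rightarrow> 'a"
    and eta :: "'m \<Rightarrow> 'e \<Rightarrow> 'a \<Rightarrow> real"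
    and elems :: "'m \<Rightarrow> 'e set"
    and refine :: "'m \<Rightarrow> 'e set \<Rightarrow> 'm"
    and theta :: real
    and Cmark :: real
    and lamlin :: real
    and lamalg :: real
    and imin :: nat
    and T0 :: 'm
    and u00 :: 'a
begin

definition Mconst :: real where
  "Mconst = onorm (\<lambda>v. F v - A 0 v) / alpha"

definition energy :: "'a \<Rightarrow> real" where
  "energy v = P v - F v"

definition eta_U :: "'m \<Rightarrow> 'e set \<Rightarrow> 'a \<Rightarrow> real" where
  "eta_U H U v = sqrt (\<Sum>T\<in>U. (eta H T v)\<^sup>2)"

definition etaT :: "'m \<Rightarrow> 'a \<Rightarrow> real" where
  "etaT H v = eta_U H (elems H) v"

text \<open>The right-hand side of the Zarantonello problem defining Phi_H(delta; w).\<close>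
definition zrhs :: "'a \<Rightarrow> 'a \<Rightarrow> real" where
  "zrhs w v = inner w v + delta * (F v - A w v)"

text \<open>The iterates u^{k,i} of the i-loop on mesh H started at u^{k,0} = w:
  u^{k,i} = Psi_H(u^{k,*}; u^{k,i-1}) with u^{k,*} = Phi_H(delta; w).\<close>
primrec iter :: "'m \<Rightarrow> 'a \<Rightarrow> nat \<Rightarrow> 'a" where
  "iter H w 0 = w"
| "iter H w (Suc i) = Psi H (zrhs w) (iter H w i)"

definition stop :: "'m \<Rightarrow> 'a \<Rightarrow> nat \<Rightarrow> bool" where
  "stop H w i \<longleftrightarrow> 1 \<le> i \<and> imin \<le> i \<and>
     norm (iter H w (i - 1) - iter H w i)
       \<le> lamalg * (lamlin * etaT H (iter H w i) + norm (iter H w i - w))"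

definition ibar :: "'m \<Rightarrow> 'a \<Rightarrow> nat" where
  "ibar H w = (LEAST i. stop H w i)"

definition uout :: "'m \<Rightarrow> 'a \<Rightarrow> 'a" where
  "uout H w = iter H w (ibar H w)"

definition kstop :: "'m \<Rightarrow> 'a \<Rightarrow> bool" where
  "kstop H w \<longleftrightarrow> energy w - energy (uout H w) \<le> lamlin\<^sup>2 * (etaT H (uout H w))\<^sup>2
                 \<and> norm (uout H w) \<le> 2 * Mconst"

definition doerfler :: "'m \<Rightarrow> 'a \<Rightarrow> 'e set \<Rightarrow> bool" where
  "doerfler H v U \<longleftrightarrow> U \<subseteq> elems H \<and> theta * (etaT H v)\<^sup>2 \<le> (eta_U H U v)\<^sup>2"

text \<open>reach l k H w: the algorithm enters the i-loop for the indices (l,k)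
  (i.e. (l,k,0) is in Q, k \<ge> 1) on mesh H = T_l with u_l^{k,0} = w.
  Nondeterminism of the marking step is covered by quantifying over all admissible choices.\<close>
inductive reach :: "nat \<Rightarrow> nat \<Rightarrow> 'm \<Rightarrow> 'a \<Rightarrow> bool" where
  init: "reach 0 1 T0 u00"
| kstep: "reach l k H w \<Longrightarrow> (\<exists>i. stop H w i) \<Longrightarrow> \<not> kstop H w
          \<Longrightarrow> reach l (Suc k) H (uout H w)"
| lstep: "reach l k H w \<Longrightarrow> (\<exists>i. stop H w i) \<Longrightarrow> kstop H w
          \<Longrightarrow> doerfler H (uout H w) Mk
          \<Longrightarrow> real (card Mk) \<le> Cmark * real (Min {card U | U. doerfler H (uout H w) U})
          \<Longrightarrow> reach (Suc l) 1 (refine H Mk) (uout H w)"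

end

end

theory Submission
  imports Defs
begin

text \<open>Only the algebraic solver matters: on a fixed mesh the i-loop contracts towards the
  Zarantonello update w* = Phi(delta; w), which exists by the Riesz representation in the
  finite-dimensional space X_H. If w* = w the iterates never move and the stopping test
  holds trivially. Otherwise the increments of the iterates tend to 0 while their distance to
  the starting point w tends to norm (w* - w) > 0, so the test holds eventually, whatever
  lamlin, lamalg > 0 and the mesh are.\<close>

lemma riesz_representation_span:
  fixes \<phi> :: "'a::real_inner \<Rightarrow> real"
  assumes "linear \<phi>" "finite B"
  shows "\<exists>r\<in>span B. \<forall>v\<in>span B. inner r v = \<phi> v"
proof -
  obtain C where C: "finite C" "span C = span B" "pairwise orthogonal C"
    using basis_orthogonal[OF assms(2)] by blast
  define r where "r = (\<Sum>b\<in>C. (\<phi> b / (b \<bullet> b)) *\<^sub>R b)"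
  have "inner r c = \<phi> c" if "c \<in> C" for c
  proof -
    have "inner r c = (\<Sum>b\<in>C. (\<phi> b / (b \<bullet> b)) * (b \<bullet> c))"
      unfolding r_def by (simp add: inner_sum_left)
    also have "\<dots> = (\<Sum>b\<in>C. if b = c then \<phi> c else 0)"
    proof (rule sum.cong[OF refl])
      fix b assume "b \<in> C"
      \<comment> \<open>C may contain 0; then both sides vanish since \<phi> 0 = 0\<close>
      then show "(\<phi> b / (b \<bullet> b)) * (b \<bullet> c) = (if b = c then \<phi> c else 0)"
        using C(3) \<open>c \<in> C\<close> linear_0[OF assms(1)]
        by (cases "c = 0") (auto simp: pairwise_def orthogonal_def)
    qed
    also have "\<dots> = \<phi> c"
      using C(1) that by simp
    finally show ?thesis .
  qed
  then have "\<forall>v\<in>span C. inner r v = \<phi> v"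
    using linear_eq_on_span[OF bounded_linear.linear[OF bounded_linear_inner_right] assms(1)]
    by blast
  moreover have "r \<in> span C"
    unfolding r_def by (intro span_sum span_mul span_base)
  ultimately show ?thesis
    using C(2) by auto
qed

lemma eventually_step_le_progress:
  fixes x :: "nat \<Rightarrow> 'a::real_normed_vector"
  assumes q: "0 \<le> q" "q < 1" and "c > 0"
    and contr: "\<And>i. norm (z - x i) \<le> q ^ i * norm (z - x 0)"
  shows "\<forall>\<^sub>F i in sequentially. norm (x i - x (Suc i)) \<le> c * norm (x (Suc i) - x 0)"
proof (cases "z = x 0")
  case True
  then have "x i = z" for i
    using contr[of i] by simp
  then show ?thesis
    by simp
next
  case False
  have "\<forall>\<^sub>F i in sequentially. norm (x i - z) \<le> q ^ i * norm (z - x 0)"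
    using contr by (intro always_eventually allI) (simp add: norm_minus_commute)
  moreover have "(\<lambda>i. q ^ i * norm (z - x 0)) \<longlonglongrightarrow> 0"
    using q by (intro tendsto_mult_left_zero LIMSEQ_power_zero) simp
  ultimately have "(\<lambda>i. x i - z) \<longlonglongrightarrow> 0"
    by (rule Lim_null_comparison)
  then have "x \<longlonglongrightarrow> z"
    by (simp add: LIM_zero_iff)
  moreover from this have "(\<lambda>i. x (Suc i)) \<longlonglongrightarrow> z"
    by (rule LIMSEQ_Suc)
  ultimately have "(\<lambda>i. c * norm (x (Suc i) - x 0) - norm (x i - x (Suc i)))
      \<longlonglongrightarrow> c * norm (z - x 0) - norm (z - z)"
    by (intro tendsto_intros)
  moreover have "0 < c * norm (z - x 0) - norm (z - z)"
    using False \<open>c > 0\<close> by simp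
  ultimately show ?thesis
    by (rule order_tendstoD(1)[THEN eventually_mono]) simp
qed

locale ailfem_contractive_solver =
  ailfem_alg A F P alpha delta Psi eta elems refine theta Cmark lamlin lamalg imin T0 u00
  for A :: "'a::{real_inner,complete_space} \<Rightarrow> 'a \<Rightarrow> real"
    and F P alpha delta
    and Psi :: "'m \<Rightarrow> ('a \<Rightarrow> real) \<Rightarrow> 'a \<Rightarrow> 'a"
    and eta :: "'m \<Rightarrow> 'e \<Rightarrow> 'a \<Rightarrow> real"
    and elems refine theta Cmark lamlin lamalg imin T0 u00 +
  fixes X :: "'m \<Rightarrow> 'a set"
    and q :: real
  assumes F_dual: "bounded_linear F"
    and A_dual: "\<And>w. bounded_linear (A w)"
    and X_fd: "\<And>H. \<exists>B. finite B \<and> X H = span B"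
    and X_nested: "\<And>H Mk. Mk \<subseteq> elems H \<Longrightarrow> X H \<subseteq> X (refine H Mk)"
    and q_bounds: "0 \<le> q" "q < 1"
    and Psi_contr: "\<And>H \<phi> wst w. bounded_linear \<phi> \<Longrightarrow> wst \<in> X H \<Longrightarrow>
                    (\<forall>v\<in>X H. inner wst v = \<phi> v) \<Longrightarrow> w \<in> X H \<Longrightarrow>
                    Psi H \<phi> w \<in> X H \<and> norm (wst - Psi H \<phi> w) \<le> q * norm (wst - w)"
    and eta_nonneg: "\<And>H T v. eta H T v \<ge> 0"
    and lamlin_nonneg: "lamlin \<ge> 0"
    and lamalg_pos: "lamalg > 0"
    and u00_in: "u00 \<in> X T0"
begin

definition zarantonello :: "'m \<Rightarrow> 'a \<Rightarrow> 'a" where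
  "zarantonello H w = (SOME r. r \<in> X H \<and> (\<forall>v\<in>X H. inner r v = zrhs w v))"

lemma bounded_linear_zrhs: "bounded_linear (zrhs w)"
proof -
  have "bounded_linear (\<lambda>v. inner w v + delta * (F v - A w v))"
    by (intro bounded_linear_add bounded_linear_inner_right F_dual A_dual
        bounded_linear_compose[OF bounded_linear_mult_right bounded_linear_sub])
  then show ?thesis
    unfolding zrhs_def[abs_def] .
qed

lemma zarantonello:
  "zarantonello H w \<in> X H" "\<forall>v\<in>X H. inner (zarantonello H w) v = zrhs w v"
proof -
  obtain B where B: "finite B" "X H = span B"
    using X_fd by blast
  then have "\<exists>r. r \<in> X H \<and> (\<forall>v\<in>X H. inner r v = zrhs w v)"
    using riesz_representation_span[OF bounded_linear.linear[OF bounded_linear_zrhs] B(1)]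
    by blast
  then have "zarantonello H w \<in> X H \<and> (\<forall>v\<in>X H. inner (zarantonello H w) v = zrhs w v)"
    unfolding zarantonello_def by (rule someI_ex)
  then show "zarantonello H w \<in> X H" "\<forall>v\<in>X H. inner (zarantonello H w) v = zrhs w v"
    by simp_all
qed

lemma iter_contraction:
  assumes "w \<in> X H"
  shows "iter H w i \<in> X H
    \<and> norm (zarantonello H w - iter H w i) \<le> q ^ i * norm (zarantonello H w - w)"
proof (induction i)
  case 0
  then show ?case
    using assms by simp
next
  case (Suc i)
  then have "norm (zarantonello H w - iter H w (Suc i))
      \<le> q * norm (zarantonello H w - iter H w i)"
    using Psi_contr[OF bounded_linear_zrhs zarantonello] by simp
  also have "\<dots> \<le> q * (q ^ i * norm (zarantonello H w - w))"
    using Suc q_bounds by (simp add: mult_left_mono)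
  finally show ?case
    using Psi_contr[OF bounded_linear_zrhs zarantonello] Suc by simp
qed

lemma reach_in_X: "reach l k H w \<Longrightarrow> w \<in> X H"
proof (induction rule: reach.induct)
  case init
  then show ?case
    using u00_in by simp
next
  case (kstep l k H w)
  then show ?case
    using iter_contraction unfolding uout_def by simp
next
  case (lstep l k H w Mk)
  then have "uout H w \<in> X H" "Mk \<subseteq> elems H"
    using iter_contraction unfolding uout_def doerfler_def by simp_all
  then show ?case
    using X_nested by blast
qed

lemma etaT_nonneg: "etaT H v \<ge> 0"
  unfolding etaT_def eta_U_def by (intro real_sqrt_ge_zero sum_nonneg) simp

lemma stop_exists:
  assumes "w \<in> X H"
  shows "\<exists>i. stop H w i"
proof -
  have "\<forall>\<^sub>F i in sequentially.
      norm (iter H w i - iter H w (Suc i)) \<le> lamalg * norm (iter H w (Suc i) - w)"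
    using eventually_step_le_progress[OF q_bounds lamalg_pos,
        where x = "iter H w" and z = "zarantonello H w"] iter_contraction[OF assms]
    by simp
  then have "\<forall>\<^sub>F i in sequentially.
      norm (iter H w i - iter H w (Suc i)) \<le> lamalg * norm (iter H w (Suc i) - w) \<and> imin \<le> Suc i"
    by (rule eventually_conj[OF _ eventually_ge_at_top[of imin], THEN eventually_mono]) simp
  then obtain i where i:
      "norm (iter H w i - iter H w (Suc i)) \<le> lamalg * norm (iter H w (Suc i) - w)"
      "imin \<le> Suc i"
    using eventually_happens'[OF sequentially_bot] by blast
  have "lamalg * norm (iter H w (Suc i) - w)
      \<le> lamalg * (lamlin * etaT H (iter H w (Suc i)) + norm (iter H w (Suc i) - w))"
    using lamalg_pos lamlin_nonneg etaT_nonneg by (simp add: mult_left_mono)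
  then have "stop H w (Suc i)"
    using i unfolding stop_def by (simp del: iter.simps)
  then show ?thesis ..
qed

end

theorem lemma5:
  fixes A :: "'a::{real_inner,complete_space} \<Rightarrow> 'a \<Rightarrow> real"
    and F :: "'a \<Rightarrow> real"
    and P :: "'a \<Rightarrow> real"
    and alpha delta q theta Cmark lamlin lamalg :: real
    and X :: "'m \<Rightarrow> 'a set"
    and Psi :: "'m \<Rightarrow> ('a \<Rightarrow> real) \<Rightarrow> 'a \<Rightarrow> 'a"
    and eta :: "'m \<Rightarrow> 'e \<Rightarrow> 'a \<Rightarrow> real"
    and elems :: "'m \<Rightarrow> 'e set"
    and refine :: "'m \<Rightarrow> 'e set \<Rightarrow> 'm"
    and imin :: nat
    and T0 :: 'm
    and u00 :: 'a
  assumes F_dual: "bounded_linear F"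
    and A_dual: "\<And>w. bounded_linear (A w)"
    and A0_ne_F: "A 0 \<noteq> F"
    and alpha_pos: "alpha > 0"
    and SM: "\<And>v w. alpha * (norm (v - w))\<^sup>2 \<le> A v (v - w) - A w (v - w)"
    and LIP: "\<And>s. s > 0 \<Longrightarrow> \<exists>L>0. \<forall>v w \<phi>. max (norm v) (norm (v - w)) \<le> s \<longrightarrow>
                  A v \<phi> - A w \<phi> \<le> L * norm (v - w) * norm \<phi>"
    and POT: "\<And>w v. ((\<lambda>t. (P (w + t *\<^sub>R v) - P w) / t) \<longlongrightarrow> A w v) (at 0)"
    and elems_fin: "\<And>H. finite (elems H)"
    and X_fd: "\<And>H. \<exists>B. finite B \<and> X H = span B"
    and X_nested: "\<And>H Mk. Mk \<subseteq> elems H \<Longrightarrow> X H \<subseteq> X (refine H Mk)"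
    and q_bounds: "0 < q" "q < 1"
    and Psi_contr: "\<And>H \<phi> wst w. bounded_linear \<phi> \<Longrightarrow> wst \<in> X H \<Longrightarrow>
                    (\<forall>v\<in>X H. inner wst v = \<phi> v) \<Longrightarrow> w \<in> X H \<Longrightarrow>
                    Psi H \<phi> w \<in> X H \<and> norm (wst - Psi H \<phi> w) \<le> q * norm (wst - w)"
    and eta_nonneg: "\<And>H T v. eta H T v \<ge> 0"
    and theta_bounds: "0 < theta" "theta \<le> 1"
    and Cmark_ge: "Cmark \<ge> 1"
    and lamlin_pos: "lamlin > 0"
    and lamalg_pos: "lamalg > 0"
    and delta_pos: "delta > 0"
    and u00_in: "u00 \<in> X T0"
    and u00_bound: "norm u00 \<le> 2 * ailfem_alg.Mconst A F alpha"
    and reached: "ailfem_alg.reach A F P alpha delta Psi eta elems refine theta Cmark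
                    lamlin lamalg imin T0 u00 l k H w"
  shows "\<exists>i. ailfem_alg.stop A F delta Psi eta elems lamlin lamalg imin H w i"
proof -
  interpret ailfem_contractive_solver A F P alpha delta Psi eta elems refine theta Cmark
      lamlin lamalg imin T0 u00 X q
    using q_bounds lamlin_pos
    by (intro ailfem_contractive_solver.intro[OF F_dual A_dual X_fd X_nested _ _ Psi_contr
          eta_nonneg _ lamalg_pos u00_in]) simp_all
  show ?thesis
    using stop_exists[OF reach_in_X[OF reached]] .
qed

end
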